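(* For every prime power $q$ and all $k,m\in\mathbb{N}$, there exists an $m$-multiplication-friendly collection $(C^{(h)};\mathrm{Enc}^{(h)})_{h\in[m]}$ of $[n,k]_q$ classical codes, where $n=q^{m(k-1)}$.
   Context: $x*y$ is the componentwise product in $\mathbb{F}_q^n$. An encoding function of an $[n,k]_q$ classical (linear) code $C\subseteq\mathbb{F}_q^n$ is an $\mathbb{F}_q$-linear isomorphism $\mathrm{Enc}:\mathbb{F}_{q^k}\to C$ (viewing $\mathbb{F}_{q^k}$ as a $k$-dimensional $\mathbb{F}_q$-space). A collection $(C^{(h)};\mathrm{Enc}^{(h)})_{h\in[m]}$ of $[n,k]_q$ codes is $m$-multiplication-friendly if there is an $\mathbb{F}_q$-linear $\mathrm{Dec}:\mathbb{F}_q^n\to\mathbb{F}_{q^k}$ with $z_1\cdots z_m=\mathrm{Dec}(\mathrm{Enc}^{(1)}(z_1)*\cdots*\mathrm{Enc}^{(m)}(z_m))$ for all $z_1,\dots,z_m\in\mathbb{F}_{q^k}$. *)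

theory Defs
  imports Main
begin

text \<open>F_q is modelled by a finite field type 'a (q = CARD('a)), and F_{q^k} by a finite
field type 'b together with an embedding emb of F_q into it, with CARD('b) = q^k.
The F_q-vector space structure on 'b is  c \<cdot> z = emb c * z .
Vectors of F_q^n are functions nat \<Rightarrow> 'a vanishing outside {0..<n}.\<close>

definition field_emb :: "('a::field \<Rightarrow> 'b::field) \<Rightarrow> bool" where
  "field_emb emb \<longleftrightarrow> emb 1 = 1 \<and> (\<forall>a b. emb (a + b) = emb a + emb b)
     \<and> (\<forall>a b. emb (a * b) = emb a * emb b)"

definition Fvec :: "nat \<Rightarrow> (nat \<Rightarrow> 'a::zero) set" where
  "Fvec n = {v. \<forall>i\<ge>n. v i = 0}"

definition cwprod :: "(nat \<Rightarrow> 'a::times) \<Rightarrow> (nat \<Rightarrow> 'a) \<Rightarrow> nat \<Rightarrow> 'a" (infixl "\<star>" 70) where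
  "x \<star> y = (\<lambda>i. x i * y i)"

definition enc_linear :: "('a::field \<Rightarrow> 'b::field) \<Rightarrow> ('b \<Rightarrow> nat \<Rightarrow> 'a) \<Rightarrow> bool" where
  "enc_linear emb E \<longleftrightarrow> (\<forall>z w. E (z + w) = (\<lambda>i. E z i + E w i))
     \<and> (\<forall>c z. E (emb c * z) = (\<lambda>i. c * E z i))"

definition dec_linear :: "('a::field \<Rightarrow> 'b::field) \<Rightarrow> nat \<Rightarrow> ((nat \<Rightarrow> 'a) \<Rightarrow> 'b) \<Rightarrow> bool" where
  "dec_linear emb n D \<longleftrightarrow> (\<forall>x\<in>Fvec n. \<forall>y\<in>Fvec n. D (\<lambda>i. x i + y i) = D x + D y)
     \<and> (\<forall>c. \<forall>x\<in>Fvec n. D (\<lambda>i. c * x i) = emb c * D x)"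

definition lin_code :: "nat \<Rightarrow> (nat \<Rightarrow> 'a::field) set \<Rightarrow> bool" where
  "lin_code n C \<longleftrightarrow> C \<subseteq> Fvec n \<and> (\<lambda>i. 0) \<in> C \<and> (\<forall>x\<in>C. \<forall>y\<in>C. (\<lambda>i. x i + y i) \<in> C)
     \<and> (\<forall>c. \<forall>x\<in>C. (\<lambda>i. c * x i) \<in> C)"

text \<open>(C, Enc) is an [n,k]_q code with encoding function Enc : F_{q^k} \<rightarrow> C
  (an F_q-linear isomorphism onto C; dimension k is then automatic since dim F_{q^k} = k).\<close>
definition coded :: "('a::field \<Rightarrow> 'b::field) \<Rightarrow> nat \<Rightarrow> (nat \<Rightarrow> 'a) set \<Rightarrow> ('b \<Rightarrow> nat \<Rightarrow> 'a) \<Rightarrow> bool" where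
  "coded emb n C E \<longleftrightarrow> lin_code n C \<and> enc_linear emb E \<and> bij_betw E UNIV C"

definition mult_friendly ::
  "('a::field \<Rightarrow> 'b::field) \<Rightarrow> nat \<Rightarrow> nat \<Rightarrow> (nat \<Rightarrow> (nat \<Rightarrow> 'a) set) \<Rightarrow> (nat \<Rightarrow> 'b \<Rightarrow> nat \<Rightarrow> 'a) \<Rightarrow> bool" where
  "mult_friendly emb n m C Enc \<longleftrightarrow>
     (\<exists>Dec. dec_linear emb n Dec \<and>
        (\<forall>z :: nat \<Rightarrow> 'b. (\<Prod>h<m. z h) = Dec (\<lambda>i. \<Prod>h<m. Enc h (z h) i)))"

end

theory Submission
  imports Defs "HOL.Vector_Spaces" "HOL-Library.FuncSet"
begin

text \<open>Choose an F_q-basis b_1, ..., b_r of F_{q^k} (so r <= k) with coordinate functionals c_j.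
Expanding every factor in this basis gives
  z_1 ... z_m = sum over t in [r]^m of (prod_h c_{t(h)}(z_h)) * (prod_h b_{t(h)}).
So if the h-th code writes z as the vector (c_{t(h)}(z))_t indexed by the tuples t, the
componentwise product of the codewords is the coefficient vector of this expansion, and the
F_q-linear map y |-> sum_t y_t * prod_h b_{t(h)} decodes the product. The length needed is
r^m <= k^m <= q^(m(k-1)); the remaining positions are padded with zeros.\<close>

lemma field_emb_prod:
  assumes "field_emb emb"
  shows "emb (\<Prod>x\<in>A. f x) = (\<Prod>x\<in>A. emb (f x))"
  using assms by (induction A rule: infinite_finite_induct) (auto simp: field_emb_def)

lemma field_emb_vector_space:
  assumes "field_emb emb"
  shows "vector_space (\<lambda>c z. emb c * z)"
  by unfold_locales (use assms in \<open>auto simp: field_emb_def algebra_simps\<close>)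

lemma two_le_card_UNIV_field: "2 \<le> card (UNIV :: 'a::{finite,field} set)"
proof -
  have "card {0::'a, 1} \<le> card (UNIV :: 'a set)" by (rule card_mono) auto
  thus ?thesis by simp
qed

lemma le_power_pred:
  assumes "2 \<le> (q::nat)"
  shows "k \<le> q ^ (k - 1)"
proof (induction k)
  case (Suc k)
  show ?case
  proof (cases k)
    case (Suc k')
    have "Suc k \<le> 2 * q ^ (k - 1)" using Suc.IH Suc by simp
    also have "\<dots> \<le> q * q ^ (k - 1)" using assms by simp
    finally show ?thesis using Suc by simp
  qed simp
qed simp

lemma card_power_le_of_independent:
  fixes emb :: "'a::{finite,field} \<Rightarrow> 'b::{finite,field}"
  assumes emb: "field_emb emb"
    and indep: "\<And>f. (\<Sum>b\<in>B. emb (f b) * b) = 0 \<Longrightarrow> \<forall>b\<in>B. f b = 0"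
  shows "card (UNIV :: 'a set) ^ card B \<le> card (UNIV :: 'b set)"
proof -
  define combination where "combination f = (\<Sum>b\<in>B. emb (f b) * b)" for f
  have "inj_on combination (B \<rightarrow>\<^sub>E UNIV)"
  proof (rule inj_onI)
    fix f g assume f: "f \<in> B \<rightarrow>\<^sub>E UNIV" and g: "g \<in> B \<rightarrow>\<^sub>E UNIV"
      and eq: "combination f = combination g"
    have "emb (f b - g b) = emb (f b) - emb (g b)" for b
      using emb unfolding field_emb_def by (metis add_diff_cancel diff_add_cancel)
    hence "(\<Sum>b\<in>B. emb (f b - g b) * b) = combination f - combination g"
      by (simp add: combination_def left_diff_distrib sum_subtractf)
    hence "\<forall>b\<in>B. f b - g b = 0"
      using indep[of "\<lambda>b. f b - g b"] eq by simp
    thus "f = g" by (intro PiE_ext[OF f g]) simp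
  qed
  hence "card (B \<rightarrow>\<^sub>E (UNIV :: 'a set)) \<le> card (UNIV :: 'b set)"
    by (rule card_inj_on_le) auto
  thus ?thesis by (simp add: card_PiE)
qed

lemma dec_linear_weighted_sum:
  assumes "field_emb emb"
  shows "dec_linear emb n (\<lambda>y. \<Sum>i<N. emb (y i) * b i)"
  using assms unfolding dec_linear_def field_emb_def
  by (auto simp: distrib_right sum.distrib sum_distrib_left mult.assoc)

lemma coded_rangeI:
  assumes lin: "enc_linear emb E" and "inj E" and "range E \<subseteq> Fvec n"
  shows "coded emb n (range E) E"
proof -
  have add: "E (z + w) = (\<lambda>i. E z i + E w i)" and scale: "E (emb a * z) = (\<lambda>i. a * E z i)"
    for z w a using lin unfolding enc_linear_def by auto
  have "E 0 i = E 0 i + E 0 i" for i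
    using fun_cong[OF add[of 0 0], of i] by simp
  hence "E 0 = (\<lambda>i. 0)"
    by (metis add_cancel_right_right)
  hence "lin_code n (range E)"
    unfolding lin_code_def using \<open>range E \<subseteq> Fvec n\<close>
    by (auto simp flip: add scale) (metis rangeI)
  thus ?thesis using lin \<open>inj E\<close> by (simp add: coded_def bij_betw_def)
qed

locale coordinates =
  fixes emb :: "'a::field \<Rightarrow> 'b::field" and r :: nat
    and \<beta> :: "nat \<Rightarrow> 'b" and c :: "nat \<Rightarrow> 'b \<Rightarrow> 'a"
  assumes field_emb: "field_emb emb"
    and coord_add: "c j (z + w) = c j z + c j w"
    and coord_scale: "c j (emb a * z) = a * c j z"
    and coord_expansion: "z = (\<Sum>j<r. emb (c j z) * \<beta> j)"

lemma field_emb_coordinates: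
  fixes emb :: "'a::{finite,field} \<Rightarrow> 'b::{finite,field}"
  assumes emb: "field_emb emb" and card_b: "card (UNIV :: 'b set) = card (UNIV :: 'a set) ^ k"
  obtains r \<beta> c where "r \<le> k" "coordinates emb r \<beta> c"
proof -
  interpret V: vector_space "\<lambda>c z. emb c * z" using field_emb_vector_space[OF emb] .
  obtain B where indep: "V.independent B" and span: "V.span B = UNIV"
    using V.basis_exists[of UNIV] by (metis top.extremum_uniqueI)
  have "card (UNIV :: 'a set) ^ card B \<le> card (UNIV :: 'a set) ^ k"
    using card_power_le_of_independent[OF emb, of B] V.independentD[OF indep finite subset_refl] card_b
    by metis
  hence "card B \<le> k"
    using two_le_card_UNIV_field[where 'a='a] by (simp add: power_le_imp_le_exp)
  moreover obtain \<phi> where \<phi>: "bij_betw \<phi> {..<card B} B"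
    using ex_bij_betw_nat_finite[of B] by (auto simp: atLeast0LessThan)
  define c where "c j z = V.representation B z (\<phi> j)" for j z
  have "coordinates emb (card B) \<phi> c"
  proof
    show "c j (z + w) = c j z + c j w" "c j (emb a * z) = a * c j z" for j z w a
      unfolding c_def using V.representation_add[OF indep] V.representation_scale[OF indep] span
      by simp_all
    fix z
    have "z = (\<Sum>b\<in>B. emb (V.representation B z b) * b)"
      using V.sum_representation_eq[OF indep _ _ subset_refl, of z] span by simp
    also have "\<dots> = (\<Sum>j<card B. emb (c j z) * \<phi> j)"
      unfolding c_def by (rule sum.reindex_bij_betw[OF \<phi>, symmetric])
    finally show "z = (\<Sum>j<card B. emb (c j z) * \<phi> j)" .
  qed (fact emb)
  ultimately show thesis using that by blast
qed

context coordinates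
begin

lemma coord_eqI:
  assumes "\<And>j. j < r \<Longrightarrow> c j z = c j w"
  shows "z = w"
  using coord_expansion[of z] coord_expansion[of w] assms by simp

lemma prod_coord_expansion:
  fixes m :: nat
  shows "(\<Prod>h<m. z h) =
     (\<Sum>t\<in>{..<m} \<rightarrow>\<^sub>E {..<r}. emb (\<Prod>h<m. c (t h) (z h)) * (\<Prod>h<m. \<beta> (t h)))"
proof -
  have "(\<Prod>h<m. z h) = (\<Prod>h<m. \<Sum>j<r. emb (c j (z h)) * \<beta> j)"
    using coord_expansion by simp
  also have "\<dots> = (\<Sum>t\<in>{..<m} \<rightarrow>\<^sub>E {..<r}. \<Prod>h<m. emb (c (t h) (z h)) * \<beta> (t h))"
    by (rule prod_sum_PiE) auto
  finally show ?thesis by (simp add: field_emb_prod[OF field_emb] prod.distrib)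
qed

lemma prod_coord_expansion_reindex:
  fixes m :: nat
  assumes "bij_betw \<phi> {..<N} ({..<m} \<rightarrow>\<^sub>E {..<r})"
  shows "(\<Prod>h<m. z h) =
     (\<Sum>i<N. emb (\<Prod>h<m. c (\<phi> i h) (z h)) * (\<Prod>h<m. \<beta> (\<phi> i h)))"
  by (subst prod_coord_expansion) (rule sum.reindex_bij_betw[OF assms, symmetric])

lemma inj_tuple_coords:
  fixes m :: nat
  assumes \<phi>: "bij_betw \<phi> {..<N} ({..<m} \<rightarrow>\<^sub>E {..<r})" and "h < m"
  shows "inj (\<lambda>z i. if i < N then c (\<phi> i h) z else 0)"
proof (rule injI)
  fix z w assume eq: "(\<lambda>i. if i < N then c (\<phi> i h) z else 0) = (\<lambda>i. if i < N then c (\<phi> i h) w else 0)"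
  show "z = w"
  proof (rule coord_eqI)
    fix j assume "j < r"
    hence "(\<lambda>_\<in>{..<m}. j) \<in> \<phi> ` {..<N}"
      using bij_betw_imp_surj_on[OF \<phi>] by auto
    then obtain i where "i < N" "\<phi> i = (\<lambda>_\<in>{..<m}. j)" by auto
    thus "c j z = c j w" using fun_cong[OF eq, of i] \<open>h < m\<close> by simp
  qed
qed

theorem mult_friendly_codes:
  assumes "r ^ m \<le> n"
  shows "\<exists>C Enc. (\<forall>h<m. coded emb n (C h) (Enc h)) \<and> mult_friendly emb n m C Enc"
proof -
  let ?T = "{..<m} \<rightarrow>\<^sub>E {..<r}"
  obtain \<phi> where \<phi>: "bij_betw \<phi> {..<r ^ m} ?T"
    using ex_bij_betw_nat_finite[of ?T] by (auto simp: card_PiE finite_PiE atLeast0LessThan)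
  define Enc where "Enc h z i = (if i < r ^ m then c (\<phi> i h) z else 0)" for h z i
  have lin: "enc_linear emb (Enc h)" for h
    unfolding enc_linear_def Enc_def by (auto simp: coord_add coord_scale)
  have inj: "inj (Enc h)" if "h < m" for h
    using inj_tuple_coords[OF \<phi> that] by (simp add: Enc_def[abs_def])
  have range: "range (Enc h) \<subseteq> Fvec n" for h
    using assms by (auto simp: Fvec_def Enc_def)
  have "coded emb n (range (Enc h)) (Enc h)" if "h < m" for h
    using coded_rangeI[OF lin inj[OF that] range] .
  moreover have "mult_friendly emb n m (\<lambda>h. range (Enc h)) Enc"
  proof -
    define Dec where "Dec y = (\<Sum>i<r ^ m. emb (y i) * (\<Prod>h<m. \<beta> (\<phi> i h)))" for y
    have "dec_linear emb n Dec"
      unfolding Dec_def by (rule dec_linear_weighted_sum[OF field_emb])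
    moreover have "(\<Prod>h<m. z h) = Dec (\<lambda>i. \<Prod>h<m. Enc h (z h) i)" for z
    proof -
      have "Dec (\<lambda>i. \<Prod>h<m. Enc h (z h) i) =
          (\<Sum>i<r ^ m. emb (\<Prod>h<m. c (\<phi> i h) (z h)) * (\<Prod>h<m. \<beta> (\<phi> i h)))"
        unfolding Dec_def Enc_def by (intro sum.cong) (simp_all add: field_emb_prod[OF field_emb])
      also have "\<dots> = (\<Prod>h<m. z h)"
        by (rule prod_coord_expansion_reindex[OF \<phi>, symmetric])
      finally show ?thesis ..
    qed
    ultimately show ?thesis
      unfolding mult_friendly_def by blast
  qed
  ultimately show ?thesis
    by (intro exI[where x = "\<lambda>h. range (Enc h)"] exI[where x = Enc]) blast
qed

end

theorem lemma4p5:
  fixes emb :: "'a::{finite,field} \<Rightarrow> 'b::{finite,field}"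
    and k m :: nat
  assumes "field_emb emb"
    and "card (UNIV :: 'b set) = card (UNIV :: 'a set) ^ k"
  shows "\<exists>(C :: nat \<Rightarrow> (nat \<Rightarrow> 'a) set) (Enc :: nat \<Rightarrow> 'b \<Rightarrow> nat \<Rightarrow> 'a).
           (\<forall>h<m. coded emb (card (UNIV :: 'a set) ^ (m * (k - 1))) (C h) (Enc h))
           \<and> mult_friendly emb (card (UNIV :: 'a set) ^ (m * (k - 1))) m C Enc"
proof -
  obtain r \<beta> c where "r \<le> k" and coords: "coordinates emb r \<beta> c"
    using field_emb_coordinates[OF assms] .
  have "r ^ m \<le> k ^ m"
    using \<open>r \<le> k\<close> by (rule power_mono) simp
  also have "\<dots> \<le> (card (UNIV :: 'a set) ^ (k - 1)) ^ m"
    using le_power_pred[OF two_le_card_UNIV_field] by (rule power_mono) simp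
  also have "\<dots> = card (UNIV :: 'a set) ^ (m * (k - 1))"
    by (simp flip: power_mult add: mult.commute)
  finally show ?thesis
    by (rule coordinates.mult_friendly_codes[OF coords])
qed

end
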